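(* Let $\Omega\subset\mathbb{R}^n$, $n\ge 2$, be a bounded open set with $C^\infty$ boundary, let $\omega\in\mathbb{S}^{n-1}$ be fixed and let $m\in\{2,3,\dots\}$ be fixed. Let $f\in L^\infty(\Omega)$ be such that \[ \int_\Omega f\,(\omega\cdot\nabla v_1)^{m-1}\,\nabla v_1\cdot\nabla v_2\,dx=0 \] for all functions $v_1,v_2\in C^\infty(\overline{\Omega})$ harmonic in $\Omega$. Then $f=0$ in $\Omega$. *)

theory Defs
  imports "HOL-Analysis.Analysis"
begin

fun diffn :: "nat \<Rightarrow> 'a::euclidean_space set \<Rightarrow> ('a \<Rightarrow> real) \<Rightarrow> bool" where
  "diffn 0 S f = continuous_on S f"
| "diffn (Suc k) S f =
     ((\<forall>x\<in>S. f differentiable (at x)) \<and>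
      (\<forall>v. diffn k S (\<lambda>x. frechet_derivative f (at x) v)))"

definition smooth_on :: "'a::euclidean_space set \<Rightarrow> ('a \<Rightarrow> real) \<Rightarrow> bool" where
  "smooth_on S f \<longleftrightarrow> (\<forall>k. diffn k S f)"

definition grad_dot :: "('a::euclidean_space \<Rightarrow> real) \<Rightarrow> ('a \<Rightarrow> real) \<Rightarrow> 'a \<Rightarrow> real" where
  "grad_dot u v x = (\<Sum>b\<in>Basis. frechet_derivative u (at x) b * frechet_derivative v (at x) b)"

definition laplacian :: "('a::euclidean_space \<Rightarrow> real) \<Rightarrow> 'a \<Rightarrow> real" where
  "laplacian u x = (\<Sum>b\<in>Basis. frechet_derivative (\<lambda>y. frechet_derivative u (at y) b) (at x) b)"

definition harmonic_on :: "'a::euclidean_space set \<Rightarrow> ('a \<Rightarrow> real) \<Rightarrow> bool" where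
  "harmonic_on S u \<longleftrightarrow> (\<forall>x\<in>S. laplacian u x = 0)"

definition smooth_boundary :: "'a::euclidean_space set \<Rightarrow> bool" where
  "smooth_boundary \<Omega> \<longleftrightarrow>
     (\<forall>x0\<in>frontier \<Omega>. \<exists>r>0. \<exists>\<psi>. smooth_on UNIV \<psi> \<and>
        (\<forall>x\<in>ball x0 r. \<exists>v. frechet_derivative \<psi> (at x) v \<noteq> 0) \<and>
        \<Omega> \<inter> ball x0 r = {x\<in>ball x0 r. \<psi> x < 0})"

definition Linf_on :: "'a::euclidean_space set \<Rightarrow> ('a \<Rightarrow> real) \<Rightarrow> bool" where
  "Linf_on \<Omega> f \<longleftrightarrow> f \<in> borel_measurable (lebesgue_on \<Omega>) \<and>
     (\<exists>C. AE x in lebesgue_on \<Omega>. \<bar>f x\<bar> \<le> C)"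

end

theory Submission
  imports Defs
begin

text \<open>
  For a harmonic function h and real t, both v1 = \<omega>\<cdot>x + t h and v2 = h are admissible, and
  the integrand of the hypothesis becomes f (1 + t \<omega>\<cdot>\<nabla>h)^(m-1) (\<omega>\<cdot>\<nabla>h + t |\<nabla>h|^2), a
  polynomial in t. Its coefficient of t shows that f is orthogonal to
  (m-1) (\<omega>\<cdot>\<nabla>h)^2 + |\<nabla>h|^2. Since n \<ge> 2, every p has some b \<bottom> p with |b| = |p|; then
  e^(p\<cdot>x) cos(b\<cdot>x) and e^(p\<cdot>x) sin(b\<cdot>x) are harmonic, and their two densities add up to a
  positive multiple of e^(2p\<cdot>x). So f is orthogonal to all real exponentials. These span a
  point-separating algebra, hence by Stone-Weierstrass f is orthogonal to every continuous
  function, then to indicators of open sets, and by outer regularity of Lebesgue measure to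
  indicators of all measurable sets, which forces f = 0 almost everywhere.
\<close>

lemma frechet_derivative_at_apply:
  assumes "(f has_derivative f') (at x)"
  shows "frechet_derivative f (at x) v = f' v"
  using frechet_derivative_at[OF assms] by simp

lemma frechet_derivative_add_at:
  assumes "f differentiable at x" "g differentiable at x"
  shows "frechet_derivative (\<lambda>x. f x + g x) (at x) v =
    frechet_derivative f (at x) v + frechet_derivative g (at x) v"
proof -
  have "((\<lambda>x. f x + g x) has_derivative
      (\<lambda>v. frechet_derivative f (at x) v + frechet_derivative g (at x) v)) (at x)"
    using assms by (intro has_derivative_add) (simp_all add: frechet_derivative_works)
  then show ?thesis by (rule frechet_derivative_at_apply)
qed

lemma frechet_derivative_cmult_at:
  fixes f :: "'a::real_normed_vector \<Rightarrow> real"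
  assumes "f differentiable at x"
  shows "frechet_derivative (\<lambda>x. c * f x) (at x) v = c * frechet_derivative f (at x) v"
proof -
  have "((\<lambda>x. c * f x) has_derivative (\<lambda>v. c * frechet_derivative f (at x) v)) (at x)"
    using assms by (intro has_derivative_mult_right) (simp add: frechet_derivative_works)
  then show ?thesis by (rule frechet_derivative_at_apply)
qed

lemma frechet_derivative_inner: "frechet_derivative (\<lambda>x. inner a x) (at x) v = inner a v"
  by (rule frechet_derivative_at_apply) (auto intro!: derivative_eq_intros)

lemma frechet_derivative_componentwise:
  fixes f :: "'a::euclidean_space \<Rightarrow> real"
  assumes "f differentiable at x"
  shows "frechet_derivative f (at x) w = (\<Sum>b\<in>Basis. inner w b * frechet_derivative f (at x) b)"
proof -
  have "linear (frechet_derivative f (at x))"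
    using assms frechet_derivative_works has_derivative_linear by blast
  from Linear_Algebra.linear_componentwise[OF this, of w 1] show ?thesis by simp
qed

lemma frechet_derivative_inner_add_cmult:
  fixes h :: "'a::euclidean_space \<Rightarrow> real"
  assumes "h differentiable at x"
  shows "frechet_derivative (\<lambda>x. inner a x + t * h x) (at x) v =
    inner a v + t * frechet_derivative h (at x) v"
  using assms
  by (simp add: frechet_derivative_add_at frechet_derivative_cmult_at frechet_derivative_inner)

lemma diffn_add: "diffn k UNIV f \<Longrightarrow> diffn k UNIV g \<Longrightarrow> diffn k UNIV (\<lambda>x. f x + g x)"
proof (induction k arbitrary: f g)
  case 0
  then show ?case by (simp add: continuous_on_add)
next
  case (Suc k)
  then have "\<And>x. f differentiable at x" "\<And>x. g differentiable at x" by auto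
  then show ?case using Suc by (simp add: frechet_derivative_add_at)
qed

lemma diffn_cmult: "diffn k UNIV f \<Longrightarrow> diffn k UNIV (\<lambda>x. c * f x)"
proof (induction k arbitrary: f)
  case 0
  then show ?case by (simp add: continuous_on_mult_left)
next
  case (Suc k)
  then have "\<And>x. f differentiable at x" by auto
  then show ?case using Suc by (simp add: frechet_derivative_cmult_at)
qed

lemma diffn_const: "diffn k UNIV (\<lambda>x. c)"
  by (induction k arbitrary: c) auto

lemma diffn_inner: "diffn k UNIV (\<lambda>x. inner a x)"
  by (cases k) (auto simp: frechet_derivative_inner diffn_const intro: continuous_intros)

lemma smooth_on_differentiable: "smooth_on UNIV f \<Longrightarrow> f differentiable at x"
  unfolding smooth_on_def using diffn.simps(2) by blast

lemma smooth_on_frechet_derivative: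
  "smooth_on UNIV f \<Longrightarrow> smooth_on UNIV (\<lambda>x. frechet_derivative f (at x) v)"
  unfolding smooth_on_def by (metis diffn.simps(2))

lemma smooth_on_continuous: "smooth_on UNIV f \<Longrightarrow> continuous_on UNIV f"
  unfolding smooth_on_def by (metis diffn.simps(1))

lemma smooth_on_inner_add_cmult:
  "smooth_on UNIV h \<Longrightarrow> smooth_on UNIV (\<lambda>x. inner a x + t * h x)"
  unfolding smooth_on_def by (auto intro!: diffn_add diffn_inner diffn_cmult)

lemma smooth_on_inner: "smooth_on UNIV (\<lambda>x. inner a x)"
  unfolding smooth_on_def by (simp add: diffn_inner)

lemma harmonic_on_inner: "harmonic_on S (\<lambda>x. inner a x)"
  unfolding harmonic_on_def laplacian_def by (simp add: frechet_derivative_inner)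

lemma laplacian_inner_add_cmult:
  assumes "smooth_on UNIV h"
  shows "laplacian (\<lambda>x. inner a x + t * h x) x = t * laplacian h x"
proof -
  let ?D = "\<lambda>b y. frechet_derivative h (at y) b"
  have "?D b differentiable at y" for b y
    using assms by (intro smooth_on_differentiable smooth_on_frechet_derivative)
  then show ?thesis
    using assms unfolding laplacian_def
    by (simp add: frechet_derivative_inner_add_cmult smooth_on_differentiable
        frechet_derivative_add_at frechet_derivative_cmult_at sum_distrib_left)
qed

lemma Linf_onE:
  assumes "Linf_on \<Omega> f"
  obtains C where "C \<ge> 0" "AE x in lebesgue_on \<Omega>. \<bar>f x\<bar> \<le> C"
    "f \<in> borel_measurable (lebesgue_on \<Omega>)"
proof -
  obtain C where "AE x in lebesgue_on \<Omega>. \<bar>f x\<bar> \<le> C" "f \<in> borel_measurable (lebesgue_on \<Omega>)"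
    using assms unfolding Linf_on_def by auto
  moreover from this(1) have "AE x in lebesgue_on \<Omega>. \<bar>f x\<bar> \<le> max C 0"
    by eventually_elim auto
  ultimately show ?thesis using that[of "max C 0"] by auto
qed

lemma integrable_Linf_on:
  assumes "\<Omega> \<in> lmeasurable" "Linf_on \<Omega> f"
  shows "integrable (lebesgue_on \<Omega>) f"
proof -
  interpret finite_measure "lebesgue_on \<Omega>" by (rule finite_measure_lebesgue_on[OF assms(1)])
  obtain C where "AE x in lebesgue_on \<Omega>. \<bar>f x\<bar> \<le> C" "f \<in> borel_measurable (lebesgue_on \<Omega>)"
    using assms(2) by (rule Linf_onE)
  then show ?thesis by (intro integrable_const_bound[where B=C]) auto
qed

lemma Linf_on_mult:
  assumes "Linf_on \<Omega> f" "Linf_on \<Omega> g"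
  shows "Linf_on \<Omega> (\<lambda>x. f x * g x)"
proof -
  obtain C D where "AE x in lebesgue_on \<Omega>. \<bar>f x\<bar> \<le> C" "AE x in lebesgue_on \<Omega>. \<bar>g x\<bar> \<le> D"
    and "f \<in> borel_measurable (lebesgue_on \<Omega>)" "g \<in> borel_measurable (lebesgue_on \<Omega>)"
    using assms unfolding Linf_on_def by auto
  moreover from this(1,2) have "AE x in lebesgue_on \<Omega>. \<bar>f x * g x\<bar> \<le> C * D"
    by eventually_elim (simp add: abs_mult mult_mono')
  ultimately show ?thesis unfolding Linf_on_def by auto
qed

lemma Linf_on_continuous:
  assumes "\<Omega> \<in> sets lebesgue" "bounded \<Omega>" "continuous_on UNIV \<phi>"
  shows "Linf_on \<Omega> \<phi>"
proof -
  have "bounded (\<phi> ` closure \<Omega>)"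
    using assms(2,3) compact_closure compact_continuous_image compact_imp_bounded
      continuous_on_subset subset_UNIV by metis
  then obtain M where "\<forall>x\<in>closure \<Omega>. \<bar>\<phi> x\<bar> \<le> M"
    unfolding bounded_iff by auto
  then have "AE x in lebesgue_on \<Omega>. \<bar>\<phi> x\<bar> \<le> M"
    using closure_subset by (intro AE_I2) (auto simp: space_restrict_space)
  moreover have "\<phi> \<in> borel_measurable (lebesgue_on \<Omega>)"
    using continuous_on_subset[OF assms(3)] assms(1)
    by (rule continuous_imp_measurable_on_sets_lebesgue) simp
  ultimately show ?thesis unfolding Linf_on_def by auto
qed

lemma Linf_on_indicator:
  assumes "A \<in> sets lebesgue"
  shows "Linf_on \<Omega> (indicator A)"
proof -
  have "indicator A \<in> borel_measurable (lebesgue_on \<Omega>)"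
    using assms by (intro measurable_restrict_space1 borel_measurable_indicator)
  then show ?thesis unfolding Linf_on_def by (auto intro!: exI[of _ 1] simp: indicator_def)
qed

lemma integrable_Linf_mult_continuous:
  assumes "open \<Omega>" "bounded \<Omega>" "Linf_on \<Omega> f" "continuous_on UNIV \<phi>"
  shows "integrable (lebesgue_on \<Omega>) (\<lambda>x. f x * \<phi> x)"
  using assms lmeasurable_open[OF assms(2,1)]
  by (intro integrable_Linf_on Linf_on_mult[OF assms(3)] Linf_on_continuous fmeasurableD) auto

section \<open>The linearised identity\<close>

definition energy_density :: "real \<Rightarrow> 'a::euclidean_space \<Rightarrow> ('a \<Rightarrow> real) \<Rightarrow> 'a \<Rightarrow> real" where
  "energy_density c \<omega> h x = c * (frechet_derivative h (at x) \<omega>)\<^sup>2 + grad_dot h h x"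

lemma continuous_on_grad_dot:
  assumes "smooth_on UNIV u" "smooth_on UNIV v"
  shows "continuous_on UNIV (grad_dot u v)"
  unfolding grad_dot_def
  using assms by (intro continuous_intros smooth_on_continuous smooth_on_frechet_derivative)

lemma continuous_on_energy_density:
  assumes "smooth_on UNIV h"
  shows "continuous_on UNIV (energy_density c \<omega> h)"
  unfolding energy_density_def
  using assms
  by (intro continuous_intros continuous_on_grad_dot smooth_on_continuous smooth_on_frechet_derivative)

lemma integral_polynomial_linear_coeff:
  fixes A C f :: "'a \<Rightarrow> real"
  assumes iA: "\<And>j. integrable M (\<lambda>x. f x * A x ^ j * A x)"
    and iC: "\<And>j. integrable M (\<lambda>x. f x * A x ^ j * C x)"
    and zero: "\<And>t. integral\<^sup>L M (\<lambda>x. f x * (1 + t * A x) ^ n * (A x + t * C x)) = 0"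
  shows "integral\<^sup>L M (\<lambda>x. f x * (real n * (A x)\<^sup>2 + C x)) = 0"
proof -
  define P where "P j = integral\<^sup>L M (\<lambda>x. f x * A x ^ j * A x)" for j
  define Q where "Q j = integral\<^sup>L M (\<lambda>x. f x * A x ^ j * C x)" for j
  define c where "c i = real (n choose i) * P i + (if i = 0 then 0 else real (n choose (i - 1)) * Q (i - 1))" for i
  have expand: "f x * (1 + t * A x) ^ n * (A x + t * C x) =
     (\<Sum>j\<le>n. t ^ j * real (n choose j) * (f x * A x ^ j * A x)) +
     (\<Sum>j\<le>n. t ^ Suc j * real (n choose j) * (f x * A x ^ j * C x))" for t x
  proof -
    have "(1 + t * A x) ^ n = (\<Sum>j\<le>n. real (n choose j) * (t * A x) ^ j)"
      using binomial_ring[of "t * A x" 1 n] by (simp add: add.commute)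
    then show ?thesis
      by (simp add: algebra_simps sum_distrib_left sum_distrib_right power_mult_distrib sum.distrib)
  qed
  have "(\<Sum>i\<le>Suc n. c i * t ^ i) = 0" for t
  proof -
    have "(\<Sum>i\<le>Suc n. c i * t ^ i) = (\<Sum>i\<le>Suc n. t ^ i * real (n choose i) * P i) +
        (\<Sum>i\<le>Suc n. if i = 0 then 0 else t ^ i * real (n choose (i - 1)) * Q (i - 1))"
      unfolding sum.distrib[symmetric] by (rule sum.cong) (auto simp: c_def algebra_simps)
    also have "(\<Sum>i\<le>Suc n. t ^ i * real (n choose i) * P i) = (\<Sum>j\<le>n. t ^ j * real (n choose j) * P j)"
      by simp
    also have "(\<Sum>i\<le>Suc n. if i = 0 then 0 else t ^ i * real (n choose (i - 1)) * Q (i - 1)) =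
        (\<Sum>j\<le>n. t ^ Suc j * real (n choose j) * Q j)"
      by (subst sum.atMost_Suc_shift) simp
    also have "(\<Sum>j\<le>n. t ^ j * real (n choose j) * P j) + (\<Sum>j\<le>n. t ^ Suc j * real (n choose j) * Q j) =
        integral\<^sup>L M (\<lambda>x. f x * (1 + t * A x) ^ n * (A x + t * C x))"
      using iA iC by (simp only: expand) (simp add: P_def Q_def)
    finally show ?thesis using zero by simp
  qed
  then have "c 1 = 0" using polyfun_eq_0[of c "Suc n"] by auto
  have "integral\<^sup>L M (\<lambda>x. f x * (real n * (A x)\<^sup>2 + C x)) =
      integral\<^sup>L M (\<lambda>x. real n * (f x * A x ^ 1 * A x) + f x * A x ^ 0 * C x)"
    by (simp add: algebra_simps power2_eq_square)
  also have "\<dots> = c 1"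
    using iA[of 1] iC[of 0] by (simp add: c_def P_def Q_def del: power_0 power_one_right)
  finally show ?thesis using \<open>c 1 = 0\<close> by simp
qed

lemma linearized_integrand:
  fixes h :: "'a::euclidean_space \<Rightarrow> real" and t :: real
  assumes "norm \<omega> = 1" "h differentiable at x"
  defines "v \<equiv> \<lambda>x. inner \<omega> x + t * h x"
  shows "(frechet_derivative v (at x) \<omega>) ^ n * grad_dot v h x =
    (1 + t * frechet_derivative h (at x) \<omega>) ^ n * (frechet_derivative h (at x) \<omega> + t * grad_dot h h x)"
proof -
  have dv: "frechet_derivative v (at x) b = inner \<omega> b + t * frechet_derivative h (at x) b" for b
    unfolding v_def using assms(2) by (rule frechet_derivative_inner_add_cmult)
  have "grad_dot v h x =
      (\<Sum>b\<in>Basis. inner \<omega> b * frechet_derivative h (at x) b) + t * grad_dot h h x"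
    unfolding grad_dot_def dv by (simp add: algebra_simps sum.distrib sum_distrib_left)
  also have "(\<Sum>b\<in>Basis. inner \<omega> b * frechet_derivative h (at x) b) = frechet_derivative h (at x) \<omega>"
    by (rule frechet_derivative_componentwise[OF assms(2), symmetric])
  finally show ?thesis using assms(1) by (simp add: dv norm_eq_1)
qed

lemma integral_energy_density_eq_0:
  fixes f h :: "'a::euclidean_space \<Rightarrow> real"
  assumes "open \<Omega>" "bounded \<Omega>" "Linf_on \<Omega> f" "norm \<omega> = 1"
    and orth: "\<forall>v1 v2. smooth_on UNIV v1 \<and> smooth_on UNIV v2 \<and> harmonic_on \<Omega> v1 \<and> harmonic_on \<Omega> v2 \<longrightarrow>
           integral\<^sup>L (lebesgue_on \<Omega>)
             (\<lambda>x. f x * (frechet_derivative v1 (at x) \<omega>) ^ n * grad_dot v1 v2 x) = 0"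
    and h: "smooth_on UNIV h" "harmonic_on \<Omega> h"
  shows "integral\<^sup>L (lebesgue_on \<Omega>) (\<lambda>x. f x * energy_density (real n) \<omega> h x) = 0"
proof -
  define A where "A x = frechet_derivative h (at x) \<omega>" for x
  have "continuous_on UNIV A" "continuous_on UNIV (grad_dot h h)"
    unfolding A_def using h(1)
    by (simp_all add: smooth_on_continuous smooth_on_frechet_derivative continuous_on_grad_dot)
  then have "integrable (lebesgue_on \<Omega>) (\<lambda>x. f x * A x ^ j * A x)"
    "integrable (lebesgue_on \<Omega>) (\<lambda>x. f x * A x ^ j * grad_dot h h x)" for j
    using integrable_Linf_mult_continuous[OF assms(1-3)]
    by (simp_all add: mult.assoc continuous_intros)
  moreover have "integral\<^sup>L (lebesgue_on \<Omega>) (\<lambda>x. f x * (1 + t * A x) ^ n * (A x + t * grad_dot h h x)) = 0"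
    for t
  proof -
    have "harmonic_on \<Omega> (\<lambda>x. inner \<omega> x + t * h x)"
      using h by (simp add: harmonic_on_def laplacian_inner_add_cmult)
    then have "integral\<^sup>L (lebesgue_on \<Omega>) (\<lambda>x. f x *
        (frechet_derivative (\<lambda>x. inner \<omega> x + t * h x) (at x) \<omega>) ^ n *
        grad_dot (\<lambda>x. inner \<omega> x + t * h x) h x) = 0"
      using orth h by (simp add: smooth_on_inner_add_cmult)
    then show ?thesis
      using assms(4) h(1) by (simp add: mult.assoc linearized_integrand smooth_on_differentiable A_def)
  qed
  ultimately show ?thesis
    unfolding energy_density_def A_def by (rule integral_polynomial_linear_coeff)
qed

section \<open>Harmonic exponentials\<close>

definition exp_trig :: "'a::euclidean_space \<Rightarrow> 'a \<Rightarrow> real \<Rightarrow> real \<Rightarrow> 'a \<Rightarrow> real" where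
  "exp_trig p b \<alpha> \<beta> x = exp (inner p x) * (\<alpha> * cos (inner b x) + \<beta> * sin (inner b x))"

lemma has_derivative_exp_trig:
  "(exp_trig p b \<alpha> \<beta> has_derivative
     (\<lambda>v. exp_trig p b (\<alpha> * inner p v + \<beta> * inner b v) (\<beta> * inner p v - \<alpha> * inner b v) x)) (at x)"
  unfolding exp_trig_def
  by (rule derivative_eq_intros refl)+ (simp add: fun_eq_iff algebra_simps)

lemma frechet_derivative_exp_trig:
  "frechet_derivative (exp_trig p b \<alpha> \<beta>) (at x) v =
     exp_trig p b (\<alpha> * inner p v + \<beta> * inner b v) (\<beta> * inner p v - \<alpha> * inner b v) x"
  by (rule frechet_derivative_at_apply[OF has_derivative_exp_trig])

lemma differentiable_exp_trig: "exp_trig p b \<alpha> \<beta> differentiable at x"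
  using has_derivative_exp_trig differentiable_def by blast

lemma smooth_on_exp_trig: "smooth_on UNIV (exp_trig p b \<alpha> \<beta>)"
proof -
  have "diffn k UNIV (exp_trig p b \<alpha> \<beta>)" for k
  proof (induction k arbitrary: \<alpha> \<beta>)
    case 0
    then show ?case
      by (auto intro!: continuous_at_imp_continuous_on differentiable_imp_continuous_within
          differentiable_exp_trig)
  next
    case (Suc k)
    then show ?case by (auto simp: frechet_derivative_exp_trig differentiable_exp_trig)
  qed
  then show ?thesis unfolding smooth_on_def ..
qed

lemma laplacian_exp_trig:
  "laplacian (exp_trig p b \<alpha> \<beta>) x =
     exp_trig p b ((inner p p - inner b b) * \<alpha> + 2 * inner p b * \<beta>)
                  ((inner p p - inner b b) * \<beta> - 2 * inner p b * \<alpha>) x"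
proof -
  have "laplacian (exp_trig p b \<alpha> \<beta>) x = (\<Sum>e\<in>Basis.
     exp_trig p b ((inner p e * inner p e - inner b e * inner b e) * \<alpha> + 2 * (inner p e * inner b e) * \<beta>)
                  ((inner p e * inner p e - inner b e * inner b e) * \<beta> - 2 * (inner p e * inner b e) * \<alpha>) x)"
    unfolding laplacian_def frechet_derivative_exp_trig
    by (intro sum.cong refl) (simp add: algebra_simps)
  also have "\<dots> = exp_trig p b
     (((\<Sum>e\<in>Basis. inner p e * inner p e) - (\<Sum>e\<in>Basis. inner b e * inner b e)) * \<alpha>
       + 2 * (\<Sum>e\<in>Basis. inner p e * inner b e) * \<beta>)
     (((\<Sum>e\<in>Basis. inner p e * inner p e) - (\<Sum>e\<in>Basis. inner b e * inner b e)) * \<beta>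
       - 2 * (\<Sum>e\<in>Basis. inner p e * inner b e) * \<alpha>) x"
    by (simp add: exp_trig_def algebra_simps sum.distrib sum_subtractf sum_distrib_left sum_distrib_right)
  finally show ?thesis by (simp only: euclidean_inner[symmetric])
qed

lemma harmonic_on_exp_trig:
  assumes "inner p b = 0" "inner b b = inner p p"
  shows "harmonic_on S (exp_trig p b \<alpha> \<beta>)"
  using assms by (simp add: harmonic_on_def laplacian_exp_trig exp_trig_def)

lemma energy_density_exp_trig_cos_add_sin:
  assumes "inner b b = inner p p"
  shows "energy_density c \<omega> (exp_trig p b 1 0) x + energy_density c \<omega> (exp_trig p b 0 1) x =
    exp (inner (2 *\<^sub>R p) x) * (c * ((inner p \<omega>)\<^sup>2 + (inner b \<omega>)\<^sup>2) + 2 * inner p p)"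
proof -
  define E where "E = exp (inner p x)"
  have sq_sum: "(frechet_derivative (exp_trig p b 1 0) (at x) v)\<^sup>2 +
      (frechet_derivative (exp_trig p b 0 1) (at x) v)\<^sup>2 = E\<^sup>2 * ((inner p v)\<^sup>2 + (inner b v)\<^sup>2)" for v
  proof -
    have "frechet_derivative (exp_trig p b 1 0) (at x) v =
        E * (inner p v * cos (inner b x) - inner b v * sin (inner b x))"
      "frechet_derivative (exp_trig p b 0 1) (at x) v =
        E * (inner b v * cos (inner b x) + inner p v * sin (inner b x))"
      by (simp_all add: frechet_derivative_exp_trig exp_trig_def E_def algebra_simps)
    moreover have "(E * (a * c - d * s))\<^sup>2 + (E * (d * c + a * s))\<^sup>2 =
        E\<^sup>2 * (a\<^sup>2 + d\<^sup>2) * (c\<^sup>2 + s\<^sup>2)" for a d c s :: real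
      by (simp add: power2_eq_square algebra_simps)
    ultimately show ?thesis by simp
  qed
  have "grad_dot (exp_trig p b 1 0) (exp_trig p b 1 0) x + grad_dot (exp_trig p b 0 1) (exp_trig p b 0 1) x
      = E\<^sup>2 * ((\<Sum>e\<in>Basis. inner p e * inner p e) + (\<Sum>e\<in>Basis. inner b e * inner b e))"
    unfolding grad_dot_def
    by (simp add: sum.distrib[symmetric] power2_eq_square[symmetric] sq_sum sum_distrib_left
        algebra_simps)
  also have "\<dots> = E\<^sup>2 * (2 * inner p p)"
    using assms by (simp only: euclidean_inner[symmetric]) simp
  finally have grad: "grad_dot (exp_trig p b 1 0) (exp_trig p b 1 0) x +
      grad_dot (exp_trig p b 0 1) (exp_trig p b 0 1) x = E\<^sup>2 * (2 * inner p p)" .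
  have "energy_density c \<omega> (exp_trig p b 1 0) x + energy_density c \<omega> (exp_trig p b 0 1) x =
      c * ((frechet_derivative (exp_trig p b 1 0) (at x) \<omega>)\<^sup>2 +
        (frechet_derivative (exp_trig p b 0 1) (at x) \<omega>)\<^sup>2) +
      (grad_dot (exp_trig p b 1 0) (exp_trig p b 1 0) x +
        grad_dot (exp_trig p b 0 1) (exp_trig p b 0 1) x)"
    unfolding energy_density_def by (simp add: algebra_simps)
  also have "\<dots> = E\<^sup>2 * (c * ((inner p \<omega>)\<^sup>2 + (inner b \<omega>)\<^sup>2) + 2 * inner p p)"
    unfolding sq_sum grad by (simp add: algebra_simps)
  also have "E\<^sup>2 = exp (inner (2 *\<^sub>R p) x)"
    unfolding E_def by (simp add: power2_eq_square exp_add[symmetric])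
  finally show ?thesis .
qed

lemma exists_orthogonal_same_norm:
  fixes p :: "'a::euclidean_space"
  assumes "DIM('a) \<ge> 2"
  obtains b where "inner p b = 0" "inner b b = inner p p"
proof -
  obtain c where c: "c \<noteq> 0" "inner p c = 0"
    using orthogonal_to_vector_exists[OF assms] unfolding orthogonal_def by blast
  show ?thesis
    using c by (intro that[of "(norm p / norm c) *\<^sub>R c"])
      (simp_all add: power2_norm_eq_inner[symmetric] power_divide)
qed

lemma integral_mult_exp_eq_0:
  fixes \<Omega> :: "'a::euclidean_space set" and f :: "'a \<Rightarrow> real"
  assumes "DIM('a) \<ge> 2" "open \<Omega>" "bounded \<Omega>" "Linf_on \<Omega> f" "norm \<omega> = 1"
    and orth: "\<forall>v1 v2. smooth_on UNIV v1 \<and> smooth_on UNIV v2 \<and> harmonic_on \<Omega> v1 \<and> harmonic_on \<Omega> v2 \<longrightarrow>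
           integral\<^sup>L (lebesgue_on \<Omega>)
             (\<lambda>x. f x * (frechet_derivative v1 (at x) \<omega>) ^ n * grad_dot v1 v2 x) = 0"
  shows "integral\<^sup>L (lebesgue_on \<Omega>) (\<lambda>x. f x * exp (inner k x)) = 0"
proof (cases "k = 0")
  case True
  \<comment> \<open>for p = 0 the functions exp_trig p b are constant, so h = \<omega>\<cdot>x is used instead\<close>
  have "energy_density (real n) \<omega> (\<lambda>x. inner \<omega> x) x = real n + 1" for x
    using assms(5)
    by (simp add: energy_density_def grad_dot_def frechet_derivative_inner euclidean_inner[symmetric]
        norm_eq_1)
  moreover have "integral\<^sup>L (lebesgue_on \<Omega>) (\<lambda>x. f x * energy_density (real n) \<omega> (\<lambda>x. inner \<omega> x) x) = 0"
    by (rule integral_energy_density_eq_0[OF assms(2-5) orth smooth_on_inner harmonic_on_inner])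
  ultimately have "integral\<^sup>L (lebesgue_on \<Omega>) (\<lambda>x. (real n + 1) * f x) = 0"
    by (simp add: mult.commute)
  then show ?thesis using True by simp
next
  case False
  define p where "p = (1/2) *\<^sub>R k"
  obtain b where b: "inner p b = 0" "inner b b = inner p p"
    using exists_orthogonal_same_norm[OF assms(1)] by blast
  let ?\<Omega> = "lebesgue_on \<Omega>" and ?e = "\<lambda>\<alpha> \<beta> x. energy_density (real n) \<omega> (exp_trig p b \<alpha> \<beta>) x"
  define \<kappa> where "\<kappa> = real n * ((inner p \<omega>)\<^sup>2 + (inner b \<omega>)\<^sup>2) + 2 * inner p p"
  have "\<kappa> > 0" unfolding \<kappa>_def p_def using False by (intro add_nonneg_pos) auto
  have "integrable ?\<Omega> (\<lambda>x. f x * ?e \<alpha> \<beta> x)" for \<alpha> \<beta>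
    using assms(2-4) smooth_on_exp_trig
    by (intro integrable_Linf_mult_continuous continuous_on_energy_density)
  then have "integral\<^sup>L ?\<Omega> (\<lambda>x. f x * ?e 1 0 x) + integral\<^sup>L ?\<Omega> (\<lambda>x. f x * ?e 0 1 x) =
      integral\<^sup>L ?\<Omega> (\<lambda>x. f x * (?e 1 0 x + ?e 0 1 x))"
    by (simp add: distrib_left)
  also have "\<dots> = integral\<^sup>L ?\<Omega> (\<lambda>x. \<kappa> * (f x * exp (inner k x)))"
  proof (rule Bochner_Integration.integral_cong[OF refl])
    have "k = 2 *\<^sub>R p" unfolding p_def by simp
    then show "f x * (?e 1 0 x + ?e 0 1 x) = \<kappa> * (f x * exp (inner k x))" for x
      unfolding energy_density_exp_trig_cos_add_sin[OF b(2)] \<kappa>_def by simp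
  qed
  moreover have "integral\<^sup>L ?\<Omega> (\<lambda>x. f x * ?e \<alpha> \<beta> x) = 0" for \<alpha> \<beta>
    using assms(2-5) orth smooth_on_exp_trig harmonic_on_exp_trig[OF b]
    by (rule integral_energy_density_eq_0)
  ultimately show ?thesis using \<open>\<kappa> > 0\<close> by simp
qed

section \<open>Density of exponential sums\<close>

inductive_set exp_sums :: "('a::euclidean_space \<Rightarrow> real) set" where
  exp: "(\<lambda>x. c * exp (inner k x)) \<in> exp_sums"
| add: "\<phi> \<in> exp_sums \<Longrightarrow> \<psi> \<in> exp_sums \<Longrightarrow> (\<lambda>x. \<phi> x + \<psi> x) \<in> exp_sums"

lemma exp_sums_mult:
  assumes "\<phi> \<in> exp_sums" "\<psi> \<in> exp_sums"
  shows "(\<lambda>x. \<phi> x * \<psi> x) \<in> exp_sums"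
  using assms
proof (induction rule: exp_sums.induct)
  case (exp c k)
  from exp.prems show ?case
  proof (induction rule: exp_sums.induct)
    case (exp d l)
    have "(\<lambda>x. c * exp (inner k x) * (d * exp (inner l x))) = (\<lambda>x. (c * d) * exp (inner (k + l) x))"
      by (simp add: fun_eq_iff inner_add_left exp_add algebra_simps)
    then show ?case by (simp add: exp_sums.exp)
  next
    case (add \<phi> \<psi>)
    then show ?case using exp_sums.add[OF add.IH] by (simp add: distrib_left)
  qed
next
  case (add \<phi>1 \<phi>2)
  then show ?case using exp_sums.add[OF add.IH] by (simp add: distrib_right)
qed

lemma exp_sums_const: "(\<lambda>x. c) \<in> exp_sums"
  using exp_sums.exp[of c 0] by simp

lemma continuous_on_exp_sums: "\<phi> \<in> exp_sums \<Longrightarrow> continuous_on S \<phi>"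
  by (induction rule: exp_sums.induct) (auto intro!: continuous_intros)

lemma exp_sums_separating:
  fixes x y :: "'a::euclidean_space"
  assumes "x \<noteq> y"
  shows "\<exists>\<phi>. \<phi> \<in> exp_sums \<and> \<phi> x \<noteq> \<phi> y"
proof -
  have "inner (x - y) x \<noteq> inner (x - y) y"
    using assms by (metis inner_diff_right inner_eq_zero_iff right_minus_eq)
  then have "exp (inner (x - y) x) \<noteq> exp (inner (x - y) y)" by simp
  then show ?thesis
    using exp_sums.exp[of 1 "x - y"] by (intro exI[of _ "\<lambda>z. exp (inner (x - y) z)"]) simp
qed

lemma eq_0_if_abs_le_mult_all_pos:
  fixes a B :: real
  assumes "\<And>e. e > 0 \<Longrightarrow> \<bar>a\<bar> \<le> e * B"
  shows "a = 0"
proof -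
  have "\<bar>a\<bar> \<le> 0 + e" if "e > 0" for e
  proof -
    have "e / (\<bar>B\<bar> + 1) > 0" using that by simp
    then have "\<bar>a\<bar> \<le> e / (\<bar>B\<bar> + 1) * B" by (rule assms)
    also have "\<dots> \<le> e" using that by (simp add: divide_le_eq mult_left_mono)
    finally show ?thesis by simp
  qed
  then show ?thesis using field_le_epsilon[of "\<bar>a\<bar>" 0] by simp
qed

lemma integral_mult_continuous_eq_0:
  fixes f :: "'a::euclidean_space \<Rightarrow> real"
  assumes "open \<Omega>" "bounded \<Omega>" "Linf_on \<Omega> f"
    and exp_orth: "\<And>k. integral\<^sup>L (lebesgue_on \<Omega>) (\<lambda>x. f x * exp (inner k x)) = 0"
    and \<phi>: "continuous_on UNIV \<phi>"
  shows "integral\<^sup>L (lebesgue_on \<Omega>) (\<lambda>x. f x * \<phi> x) = 0"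
proof -
  let ?\<Omega> = "lebesgue_on \<Omega>"
  have integrable: "integrable ?\<Omega> (\<lambda>x. f x * \<psi> x)" if "continuous_on UNIV \<psi>" for \<psi>
    using integrable_Linf_mult_continuous[OF assms(1-3) that] .
  have exp_sums: "integral\<^sup>L ?\<Omega> (\<lambda>x. f x * \<psi> x) = 0" if "\<psi> \<in> exp_sums" for \<psi>
    using that
  proof (induction rule: exp_sums.induct)
    case (exp c k)
    then show ?case using exp_orth by (simp add: mult.left_commute)
  next
    case (add \<phi> \<psi>)
    then show ?case by (simp add: distrib_left integrable continuous_on_exp_sums)
  qed
  define B where "B = integral\<^sup>L ?\<Omega> (\<lambda>x. \<bar>f x\<bar>)"
  have "\<bar>integral\<^sup>L ?\<Omega> (\<lambda>x. f x * \<phi> x)\<bar> \<le> e * B" if "e > 0" for e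
  proof -
    have "\<exists>\<psi>. \<psi> \<in> exp_sums \<and> (\<forall>x\<in>closure \<Omega>. \<bar>\<phi> x - \<psi> x\<bar> < e)"
    proof (rule Stone_Weierstrass_HOL)
      show "compact (closure \<Omega>)" using assms(2) by (simp add: compact_closure)
      show "continuous_on (closure \<Omega>) \<phi>" using continuous_on_subset[OF \<phi>] by blast
    qed (use \<open>e > 0\<close> in \<open>auto intro: exp_sums.add exp_sums_const exp_sums_mult
          exp_sums_separating continuous_on_exp_sums\<close>)
    then obtain \<psi> where \<psi>: "\<psi> \<in> exp_sums" "\<forall>x\<in>closure \<Omega>. \<bar>\<phi> x - \<psi> x\<bar> < e"
      by blast
    have "integral\<^sup>L ?\<Omega> (\<lambda>x. f x * \<phi> x) = integral\<^sup>L ?\<Omega> (\<lambda>x. f x * (\<phi> x - \<psi> x))"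
      using exp_sums[OF \<psi>(1)] integrable[OF \<phi>] integrable[OF continuous_on_exp_sums[OF \<psi>(1)]]
      by (simp add: right_diff_distrib)
    also have "\<bar>\<dots>\<bar> \<le> integral\<^sup>L ?\<Omega> (\<lambda>x. e * \<bar>f x\<bar>)"
    proof (rule integral_abs_bound_integral)
      fix x assume "x \<in> space ?\<Omega>"
      then have "\<bar>\<phi> x - \<psi> x\<bar> \<le> e" using \<psi>(2) closure_subset by fastforce
      then show "\<bar>f x * (\<phi> x - \<psi> x)\<bar> \<le> e * \<bar>f x\<bar>"
        by (metis abs_ge_zero abs_mult mult.commute mult_left_mono)
    qed (use integrable[of "\<lambda>x. \<phi> x - \<psi> x"] integrable[of "\<lambda>_. 1"] \<phi> \<psi>(1) in
         \<open>auto intro: continuous_intros continuous_on_exp_sums\<close>)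
    finally show ?thesis unfolding B_def by simp
  qed
  then show ?thesis by (rule eq_0_if_abs_le_mult_all_pos)
qed

lemma integral_mult_indicator_open_eq_0:
  fixes f :: "'a::euclidean_space \<Rightarrow> real"
  assumes "open \<Omega>" "bounded \<Omega>" "Linf_on \<Omega> f"
    and cont: "\<And>\<phi>. continuous_on UNIV \<phi> \<Longrightarrow> integral\<^sup>L (lebesgue_on \<Omega>) (\<lambda>x. f x * \<phi> x) = 0"
    and "open T"
  shows "integral\<^sup>L (lebesgue_on \<Omega>) (\<lambda>x. f x * indicator T x) = 0"
proof (cases "T = UNIV")
  case True
  then show ?thesis using cont[of "\<lambda>_. 1"] by simp
next
  case False
  let ?\<Omega> = "lebesgue_on \<Omega>"
  define \<phi> where "\<phi> i x = min 1 (real i * infdist x (- T))" for i x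
  have \<phi>: "continuous_on UNIV (\<phi> i)" for i
    unfolding \<phi>_def by (intro continuous_intros continuous_on_infdist)
  have integrable_T: "integrable ?\<Omega> (\<lambda>x. f x * indicator T x)"
    using assms(1-3) \<open>open T\<close>
    by (intro integrable_Linf_on lmeasurable_open Linf_on_mult[OF assms(3)] Linf_on_indicator) auto
  have "(\<lambda>i. \<phi> i x) \<longlonglongrightarrow> indicator T x" for x
  proof (cases "x \<in> T")
    case True
    then have d: "infdist x (- T) > 0"
      using False \<open>open T\<close> by (intro infdist_pos_not_in_closed) auto
    then obtain N where N: "1 < real N * infdist x (- T)"
      using reals_Archimedean3 by blast
    have "\<phi> i x = 1" if "i \<ge> N" for i
    proof -
      have "real N * infdist x (- T) \<le> real i * infdist x (- T)"
        using that d by (intro mult_right_mono) auto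
      then show ?thesis using N by (simp add: \<phi>_def)
    qed
    then show ?thesis
      using True by (intro tendsto_eventually eventually_sequentiallyI[of N]) auto
  qed (simp add: \<phi>_def)
  then have "(\<lambda>i. integral\<^sup>L ?\<Omega> (\<lambda>x. f x * \<phi> i x)) \<longlonglongrightarrow> integral\<^sup>L ?\<Omega> (\<lambda>x. f x * indicator T x)"
  proof (intro integral_dominated_convergence[where w="\<lambda>x. \<bar>f x\<bar>"] AE_I2 tendsto_mult_left)
    show "norm (f x * \<phi> i x) \<le> \<bar>f x\<bar>" for i x
      by (simp add: \<phi>_def abs_mult mult_left_le infdist_nonneg)
  qed (use integrable_Linf_mult_continuous[OF assms(1-3)] \<phi>
        integrable_Linf_mult_continuous[OF assms(1-3), of "\<lambda>_. 1"] integrable_T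
        in \<open>auto intro: borel_measurable_integrable\<close>)
  then show ?thesis using cont[OF \<phi>] LIMSEQ_unique[OF tendsto_const] by fastforce
qed

lemma abs_integral_mult_indicator_le:
  fixes f :: "'a::euclidean_space \<Rightarrow> real"
  assumes \<Omega>: "\<Omega> \<in> lmeasurable" and "C \<ge> 0"
    and C: "AE x in lebesgue_on \<Omega>. \<bar>f x\<bar> \<le> C"
    and B: "B \<in> lmeasurable"
  shows "\<bar>integral\<^sup>L (lebesgue_on \<Omega>) (\<lambda>x. f x * indicator B x)\<bar> \<le> C * measure lebesgue B"
proof -
  have "\<bar>integral\<^sup>L (lebesgue_on \<Omega>) (\<lambda>x. f x * indicator B x)\<bar> \<le>
      integral\<^sup>L (lebesgue_on \<Omega>) (\<lambda>x. \<bar>f x * indicator B x\<bar>)"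
    by (rule integral_abs_bound)
  also have "\<dots> \<le> integral\<^sup>L (lebesgue_on \<Omega>) (\<lambda>x. C * indicator B x)"
  proof (rule integral_mono_AE')
    show "integrable (lebesgue_on \<Omega>) (\<lambda>x. C * indicator B x)"
      using B \<Omega> by (intro integrable_Linf_on Linf_on_mult Linf_on_indicator)
        (auto simp: Linf_on_def)
  qed (use C \<open>C \<ge> 0\<close> in \<open>auto elim!: eventually_mono simp: indicator_def\<close>)
  also have "\<dots> = C * measure lebesgue (B \<inter> \<Omega>)"
    using \<Omega> by (simp add: measure_restrict_space fmeasurableD)
  also have "\<dots> \<le> C * measure lebesgue B"
    using B \<Omega> \<open>C \<ge> 0\<close> by (intro mult_left_mono measure_mono_fmeasurable) auto
  finally show ?thesis .
qed

lemma integral_mult_indicator_eq_0: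
  fixes f :: "'a::euclidean_space \<Rightarrow> real"
  assumes "open \<Omega>" "bounded \<Omega>" "Linf_on \<Omega> f"
    and opens: "\<And>T. open T \<Longrightarrow> integral\<^sup>L (lebesgue_on \<Omega>) (\<lambda>x. f x * indicator T x) = 0"
    and A: "A \<in> sets lebesgue"
  shows "integral\<^sup>L (lebesgue_on \<Omega>) (\<lambda>x. f x * indicator A x) = 0"
proof -
  let ?\<Omega> = "lebesgue_on \<Omega>"
  obtain C where C: "C \<ge> 0" "AE x in ?\<Omega>. \<bar>f x\<bar> \<le> C"
    using assms(3) by (rule Linf_onE)
  have integrable: "integrable ?\<Omega> (\<lambda>x. f x * indicator S x)" if "S \<in> sets lebesgue" for S
    using that assms(1,2)
    by (intro integrable_Linf_on lmeasurable_open Linf_on_mult[OF assms(3)] Linf_on_indicator)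
  have "\<bar>integral\<^sup>L ?\<Omega> (\<lambda>x. f x * indicator A x)\<bar> \<le> e * C" if "e > 0" for e
  proof -
    obtain U where U: "open U" "A \<subseteq> U" "U - A \<in> lmeasurable" "emeasure lebesgue (U - A) < e"
      using sets_lebesgue_outer_open[OF A \<open>e > 0\<close>] by blast
    have "integral\<^sup>L ?\<Omega> (\<lambda>x. f x * indicator U x) =
        integral\<^sup>L ?\<Omega> (\<lambda>x. f x * indicator A x + f x * indicator (U - A) x)"
      using U(2) by (intro Bochner_Integration.integral_cong) (auto simp: indicator_def)
    then have "integral\<^sup>L ?\<Omega> (\<lambda>x. f x * indicator A x) = - integral\<^sup>L ?\<Omega> (\<lambda>x. f x * indicator (U - A) x)"
      using opens[OF U(1)] integrable[OF A] integrable[OF fmeasurableD[OF U(3)]] by simp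
    also have "\<bar>\<dots>\<bar> \<le> C * measure lebesgue (U - A)"
      using abs_integral_mult_indicator_le[OF lmeasurable_open[OF assms(2,1)] C U(3)] by simp
    also have "\<dots> \<le> C * e"
      using U(3,4) \<open>e > 0\<close> C(1)
      by (intro mult_left_mono) (auto simp: emeasure_eq_measure2 ennreal_less_iff less_imp_le)
    finally show ?thesis by (simp add: mult.commute)
  qed
  then show ?thesis by (rule eq_0_if_abs_le_mult_all_pos)
qed

lemma AE_eq_0_if_orthogonal_to_continuous:
  fixes f :: "'a::euclidean_space \<Rightarrow> real"
  assumes "open \<Omega>" "bounded \<Omega>" "Linf_on \<Omega> f"
    and "\<And>\<phi>. continuous_on UNIV \<phi> \<Longrightarrow> integral\<^sup>L (lebesgue_on \<Omega>) (\<lambda>x. f x * \<phi> x) = 0"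
  shows "AE x in lebesgue_on \<Omega>. f x = 0"
proof -
  interpret finite_measure "lebesgue_on \<Omega>"
    using assms(1,2) by (intro finite_measure_lebesgue_on lmeasurable_open)
  show ?thesis
  proof (rule density_zero)
    show "integrable (lebesgue_on \<Omega>) f"
      using integrable_Linf_mult_continuous[OF assms(1-3), of "\<lambda>_. 1"] by simp
    fix A assume "A \<in> sets (lebesgue_on \<Omega>)"
    then have "A \<in> sets lebesgue"
      using assms(1) sets_restrict_space_iff[of \<Omega> lebesgue A] by simp
    then have "integral\<^sup>L (lebesgue_on \<Omega>) (\<lambda>x. f x * indicator A x) = 0"
      using integral_mult_indicator_eq_0[OF assms(1-3) integral_mult_indicator_open_eq_0[OF assms]]
      by blast
    then show "set_lebesgue_integral (lebesgue_on \<Omega>) A f = 0"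
      by (simp add: set_lebesgue_integral_def mult.commute)
  qed
qed

theorem propositionA1:
  fixes \<Omega> :: "'a::euclidean_space set" and \<omega> :: 'a and m :: nat and f :: "'a \<Rightarrow> real"
  assumes "DIM('a) \<ge> 2"
    and "open \<Omega>" and "bounded \<Omega>" and "smooth_boundary \<Omega>"
    and "norm \<omega> = 1"
    and "m \<ge> 2"
    and "Linf_on \<Omega> f"
    and "\<forall>v1 v2. smooth_on UNIV v1 \<and> smooth_on UNIV v2 \<and> harmonic_on \<Omega> v1 \<and> harmonic_on \<Omega> v2 \<longrightarrow>
           integral\<^sup>L (lebesgue_on \<Omega>)
             (\<lambda>x. f x * (frechet_derivative v1 (at x) \<omega>) ^ (m - 1) * grad_dot v1 v2 x) = 0"
  shows "AE x in lebesgue_on \<Omega>. f x = 0"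
proof (rule AE_eq_0_if_orthogonal_to_continuous[OF assms(2,3,7)])
  have "integral\<^sup>L (lebesgue_on \<Omega>) (\<lambda>x. f x * exp (inner k x)) = 0" for k
    using assms(1-3,7,5,8) by (rule integral_mult_exp_eq_0)
  then show "integral\<^sup>L (lebesgue_on \<Omega>) (\<lambda>x. f x * \<phi> x) = 0" if "continuous_on UNIV \<phi>" for \<phi>
    using integral_mult_continuous_eq_0[OF assms(2,3,7)] that by blast
qed

end
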